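(* Let $G=(V,E)$ be a connected, $d$-regular graph on $n$ vertices with adjacency matrix $A$, let $D=d\cdot I_n$, and let $\{\phi_1,\dots,\phi_n\}\subset\mathbb{R}^n$ be an orthonormal basis of eigenvectors of the symmetric matrix $AD^{-1}$, where $\phi_i$ has eigenvalue $\lambda_i$, the eigenvalues are ordered as $1=\lambda_1\geq|\lambda_2|\geq\dots\geq|\lambda_n|\geq 0$, and $\phi_1 = \frac{1}{\sqrt n}(1,\dots,1)$. Let $1\leq \ell\leq n-1$. Then there exist a subset $U\subset V$ with $\#U\leq \ell$ and nonnegative weights $a_u\geq 0$ ($u\in U$) such that for all functions $f:V\to\mathbb{R}$, $$\left|\frac{1}{|V|}\sum_{v\in V} f(v) - \sum_{u\in U} a_u f(u)\right| \leq \left(\sum_{i=\ell+1}^n \langle \phi_i, f\rangle^2\right)^{1/2}.$$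
   Context: Functions $f:V\to\mathbb{R}$ are identified with vectors in $\mathbb{R}^n$ indexed by the vertices, and $\langle\cdot,\cdot\rangle$ is the standard inner product on $\mathbb{R}^n$. *)

theory Defs
  imports "HOL-Analysis.Analysis"
begin

text \<open>Finite simple graphs on the vertex type 'v (vertex set V = UNIV),
  given by a symmetric irreflexive edge relation E.\<close>

definition simple_graph :: "('v \<Rightarrow> 'v \<Rightarrow> bool) \<Rightarrow> bool" where
  "simple_graph E \<longleftrightarrow> (\<forall>v w. E v w \<longleftrightarrow> E w v) \<and> (\<forall>v. \<not> E v v)"

definition regular_graph :: "('v::finite \<Rightarrow> 'v \<Rightarrow> bool) \<Rightarrow> nat \<Rightarrow> bool" where
  "regular_graph E d \<longleftrightarrow> (\<forall>v. card {w. E v w} = d)"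

definition connected_graph :: "('v \<Rightarrow> 'v \<Rightarrow> bool) \<Rightarrow> bool" where
  "connected_graph E \<longleftrightarrow> (\<forall>v w. E\<^sup>*\<^sup>* v w)"

definition adj_matrix :: "('v \<Rightarrow> 'v \<Rightarrow> bool) \<Rightarrow> 'v \<Rightarrow> 'v \<Rightarrow> real" where
  "adj_matrix E v w = (if E v w then 1 else 0)"

definition vinner :: "('v::finite \<Rightarrow> real) \<Rightarrow> ('v \<Rightarrow> real) \<Rightarrow> real" where
  "vinner f g = (\<Sum>v\<in>UNIV. f v * g v)"

definition mat_app :: "('v::finite \<Rightarrow> 'v \<Rightarrow> real) \<Rightarrow> ('v \<Rightarrow> real) \<Rightarrow> 'v \<Rightarrow> real" where
  "mat_app M f v = (\<Sum>w\<in>UNIV. M v w * f w)"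

end

theory Submission
  imports Defs
begin

text \<open>The error \<open>f \<mapsto> mean f - (\<Sum>u\<in>U. a u * f u)\<close> is the inner product with
  \<open>L = 1/n - a\<close>. If the weights \<open>a \<ge> 0\<close> sum to 1 and annihilate \<open>\<phi>\<^sub>2, \<dots>, \<phi>\<^sub>l\<close>
  (whose means vanish, as they are orthogonal to the constant \<open>\<phi>\<^sub>1\<close>), then \<open>L\<close> is
  orthogonal to \<open>\<phi>\<^sub>1, \<dots>, \<phi>\<^sub>l\<close> and \<open>\<parallel>L\<parallel>\<^sup>2 = \<Sum>a\<^sup>2 - 1/n \<le> 1\<close>, so Parseval and
  Cauchy-Schwarz bound the error by \<open>sqrt (\<Sum>i>l. \<langle>\<phi>\<^sub>i, f\<rangle>\<^sup>2)\<close>. Weights on at most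
  \<open>l\<close> vertices exist by Caratheodory's theorem: the points \<open>\<Sum>\<^sub>j \<phi>\<^sub>j(u) \<phi>\<^sub>j\<close> (\<open>2 \<le> j \<le> l\<close>)
  have mean 0 and span a space of dimension at most \<open>l - 1\<close>.\<close>

lemma sparse_convex_combination_of_centred_family:
  fixes q :: "'v::finite \<Rightarrow> 'a::euclidean_space"
  assumes centred: "(\<Sum>v\<in>UNIV. q v) = 0"
  obtains U a where "card U \<le> dim (range q) + 1" "\<forall>u\<in>U. 0 \<le> a u" "sum a U = 1"
    "(\<Sum>u\<in>U. a u *\<^sub>R q u) = 0"
proof -
  have "(\<Sum>v\<in>UNIV. (1 / CARD('v)) *\<^sub>R q v) \<in> convex hull range q"
    by (rule convex_sum) (auto intro: hull_inc)
  then have "0 \<in> convex hull range q"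
    by (simp add: centred flip: scaleR_sum_right)
  then obtain S where S: "finite S" "S \<subseteq> range q" "card S \<le> aff_dim (range q) + 1"
      "0 \<in> convex hull S"
    using caratheodory_aff_dim[of "range q"] by auto
  have "aff_dim (range q) \<le> aff_dim (span (range q))"
    by (rule aff_dim_subset) (rule span_superset)
  also have "\<dots> = dim (range q)"
    by (simp add: aff_dim_subspace)
  finally have card_S: "card S \<le> dim (range q) + 1"
    using S(3) by linarith
  obtain U where U: "inj_on q U" "S = q ` U"
    using S(2) by (auto simp: subset_image_inj)
  obtain w where w: "\<forall>x\<in>S. 0 \<le> w x" "sum w S = 1" "(\<Sum>x\<in>S. w x *\<^sub>R x) = 0"
    using S(4) convex_hull_finite[OF S(1)] by auto
  show thesis
  proof
    show "card U \<le> dim (range q) + 1"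
      using card_S U by (simp add: card_image)
    show "\<forall>u\<in>U. 0 \<le> (w \<circ> q) u" "sum (w \<circ> q) U = 1" "(\<Sum>u\<in>U. (w \<circ> q) u *\<^sub>R q u) = 0"
      using w U by (simp_all add: sum.reindex)
  qed
qed

lemma sparse_weights_with_vanishing_moments:
  fixes g :: "'j \<Rightarrow> 'v::finite \<Rightarrow> real"
  assumes "finite J" and centred: "\<And>j. j \<in> J \<Longrightarrow> (\<Sum>v\<in>UNIV. g j v) = 0"
  obtains U a where "card U \<le> card J + 1" "\<forall>u\<in>U. 0 \<le> a u" "sum a U = 1"
    "\<forall>j\<in>J. (\<Sum>u\<in>U. a u * g j u) = 0"
proof -
  define q :: "'v \<Rightarrow> real^'v" where "q u = (\<Sum>j\<in>J. g j u *\<^sub>R vec_lambda (g j))" for u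
  have "(\<Sum>u\<in>UNIV. q u) = (\<Sum>j\<in>J. (\<Sum>u\<in>UNIV. g j u) *\<^sub>R vec_lambda (g j))"
    unfolding q_def scaleR_sum_left by (rule sum.swap)
  also have "\<dots> = 0"
    by (simp add: centred)
  finally have centred_q: "(\<Sum>u\<in>UNIV. q u) = 0" .
  have dim_q: "dim (range q) \<le> card J"
  proof -
    have "dim (range q) \<le> card ((\<lambda>j. vec_lambda (g j)) ` J)"
      by (rule dim_le_card) (auto simp: q_def \<open>finite J\<close> intro: span_sum span_scale span_base)
    also have "\<dots> \<le> card J"
      by (rule card_image_le[OF \<open>finite J\<close>])
    finally show ?thesis .
  qed
  obtain U a where card_U: "card U \<le> dim (range q) + 1"
      and weights: "\<forall>u\<in>U. 0 \<le> a u" "sum a U = 1"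
      and combination: "(\<Sum>u\<in>U. a u *\<^sub>R q u) = 0"
    using sparse_convex_combination_of_centred_family[OF centred_q] by blast
  define c where "c j = (\<Sum>u\<in>U. a u * g j u)" for j
  txt \<open>The moments \<open>c\<close> vanish because \<open>\<Sum>c\<^sup>2\<close> is the pairing of \<open>a\<close> with
    \<open>\<Sum>\<^sub>j c j * g j\<close>, which is the vanishing combination of the \<open>q u\<close>.\<close>
  have vanishing: "(\<Sum>j\<in>J. c j * g j v) = 0" for v
  proof -
    have "(\<Sum>j\<in>J. c j * g j v) = (\<Sum>u\<in>U. \<Sum>j\<in>J. a u * (g j u * g j v))"
      unfolding c_def sum_distrib_right by (subst sum.swap) (simp add: mult_ac)
    also have "\<dots> = (\<Sum>u\<in>U. a u *\<^sub>R q u) $ v"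
      by (simp add: q_def sum_distrib_left)
    finally show ?thesis
      by (simp add: combination)
  qed
  have "(\<Sum>j\<in>J. (c j)\<^sup>2) = (\<Sum>u\<in>U. \<Sum>j\<in>J. a u * (c j * g j u))"
    unfolding power2_eq_square
    by (subst (2) c_def) (simp add: sum_distrib_left sum_distrib_right sum.swap[of _ J U] mult_ac)
  also have "\<dots> = 0"
    by (simp add: vanishing flip: sum_distrib_left)
  finally have "\<forall>j\<in>J. c j = 0"
    by (simp add: sum_nonneg_eq_0_iff \<open>finite J\<close>)
  moreover have "card U \<le> card J + 1"
    using card_U dim_q by linarith
  ultimately show thesis
    using that weights by (simp add: c_def)
qed

lemma vinner_commute: "vinner f g = vinner g f"
  by (simp add: vinner_def mult.commute)

lemma vinner_eq_inner_vec_lambda: "vinner f g = vec_lambda f \<bullet> vec_lambda g"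
  by (simp add: vinner_def inner_vec_def)

lemma orthonormal_family_expansion:
  fixes b :: "'i \<Rightarrow> 'a::euclidean_space"
  assumes orthonormal: "\<And>i j. i \<in> I \<Longrightarrow> j \<in> I \<Longrightarrow> b i \<bullet> b j = (if i = j then 1 else 0)"
    and card_I: "card I = DIM('a)"
  shows "x = (\<Sum>i\<in>I. (x \<bullet> b i) *\<^sub>R b i)"
proof -
  have "finite I"
    using card_I card.infinite by fastforce
  have inj: "inj_on b I"
    by (rule inj_onI) (metis orthonormal zero_neq_one)
  have "pairwise orthogonal (b ` I)"
    unfolding pairwise_def orthogonal_def using orthonormal by fastforce
  moreover have "0 \<notin> b ` I"
    using orthonormal by fastforce
  ultimately have "independent (b ` I)"
    by (rule pairwise_orthogonal_independent)
  then have spanning: "UNIV \<subseteq> span (b ` I)"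
    by (rule card_ge_dim_independent[OF subset_UNIV]) (simp add: card_image inj card_I)
  define r where "r = x - (\<Sum>i\<in>I. (x \<bullet> b i) *\<^sub>R b i)"
  have "r \<bullet> b i = 0" if "i \<in> I" for i
  proof -
    have "(\<Sum>k\<in>I. (x \<bullet> b k) * (b k \<bullet> b i)) = (\<Sum>k\<in>I. if k = i then x \<bullet> b i else 0)"
      by (rule sum.cong) (simp_all add: orthonormal that)
    then show ?thesis
      using that \<open>finite I\<close> by (simp add: r_def inner_diff_left inner_sum_left)
  qed
  then have "orthogonal r r"
    by (intro orthogonal_to_span[of r "b ` I"]) (use spanning in \<open>auto simp: orthogonal_def\<close>)
  then show ?thesis
    by (simp add: r_def orthogonal_def)
qed

lemma vinner_parseval:
  fixes \<phi> :: "'i \<Rightarrow> 'v::finite \<Rightarrow> real"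
  assumes "\<And>i j. i \<in> I \<Longrightarrow> j \<in> I \<Longrightarrow> vinner (\<phi> i) (\<phi> j) = (if i = j then 1 else 0)"
    and "card I = CARD('v)"
  shows "vinner f g = (\<Sum>i\<in>I. vinner f (\<phi> i) * vinner (\<phi> i) g)"
proof -
  have "vec_lambda g = (\<Sum>i\<in>I. (vec_lambda g \<bullet> vec_lambda (\<phi> i)) *\<^sub>R vec_lambda (\<phi> i))"
    by (rule orthonormal_family_expansion) (use assms in \<open>simp_all add: vinner_eq_inner_vec_lambda\<close>)
  then have "vinner f g = vec_lambda f \<bullet> (\<Sum>i\<in>I. vinner (\<phi> i) g *\<^sub>R vec_lambda (\<phi> i))"
    by (simp add: vinner_eq_inner_vec_lambda inner_commute)
  then show ?thesis
    by (simp add: inner_sum_right vinner_eq_inner_vec_lambda mult.commute)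
qed

lemma abs_vinner_le_tail_coefficients:
  fixes \<phi> :: "'i \<Rightarrow> 'v::finite \<Rightarrow> real"
  assumes orthonormal: "\<And>i j. i \<in> I \<Longrightarrow> j \<in> I \<Longrightarrow> vinner (\<phi> i) (\<phi> j) = (if i = j then 1 else 0)"
    and card_I: "card I = CARD('v)"
    and "J \<subseteq> I"
    and orthogonal: "\<And>i. i \<in> I - J \<Longrightarrow> vinner L (\<phi> i) = 0"
  shows "\<bar>vinner L f\<bar> \<le> sqrt (vinner L L) * sqrt (\<Sum>i\<in>J. (vinner (\<phi> i) f)\<^sup>2)"
proof -
  have "finite I"
    using card_I card.infinite by fastforce
  have "vinner L f = (\<Sum>i\<in>I. vinner L (\<phi> i) * vinner (\<phi> i) f)"
    by (rule vinner_parseval[OF orthonormal card_I])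
  also have "\<dots> = (\<Sum>i\<in>J. vinner L (\<phi> i) * vinner (\<phi> i) f)"
    by (rule sum.mono_neutral_right) (use \<open>finite I\<close> \<open>J \<subseteq> I\<close> orthogonal in auto)
  finally have "(vinner L f)\<^sup>2 \<le> (\<Sum>i\<in>J. (vinner L (\<phi> i))\<^sup>2) * (\<Sum>i\<in>J. (vinner (\<phi> i) f)\<^sup>2)"
    by (simp only: Cauchy_Schwarz_ineq_sum)
  also have "(\<Sum>i\<in>J. (vinner L (\<phi> i))\<^sup>2) \<le> (\<Sum>i\<in>I. (vinner L (\<phi> i))\<^sup>2)"
    by (rule sum_mono2) (use \<open>finite I\<close> \<open>J \<subseteq> I\<close> in auto)
  also have "\<dots> = vinner L L"
    using vinner_parseval[OF orthonormal card_I, of L L] vinner_commute[of "\<phi> _" L]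
    by (simp add: power2_eq_square)
  finally have "(vinner L f)\<^sup>2 \<le> vinner L L * (\<Sum>i\<in>J. (vinner (\<phi> i) f)\<^sup>2)"
    by (simp add: mult_right_mono sum_nonneg)
  then have "sqrt ((vinner L f)\<^sup>2) \<le> sqrt (vinner L L * (\<Sum>i\<in>J. (vinner (\<phi> i) f)\<^sup>2))"
    by (rule real_sqrt_le_mono)
  then show ?thesis
    by (simp add: real_sqrt_mult)
qed

definition quadrature_error :: "'v set \<Rightarrow> ('v \<Rightarrow> real) \<Rightarrow> 'v::finite \<Rightarrow> real" where
  "quadrature_error U a v = 1 / CARD('v) - (if v \<in> U then a v else 0)"

lemma vinner_quadrature_error:
  "vinner (quadrature_error U a) f = (1 / CARD('v)) * (\<Sum>v\<in>UNIV. f v) - (\<Sum>u\<in>U. a u * f u)"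
  for f :: "'v::finite \<Rightarrow> real"
proof -
  have "(\<Sum>v\<in>UNIV. (if v \<in> U then a v else 0) * f v) = (\<Sum>v\<in>UNIV. if v \<in> U then a v * f v else 0)"
    by (rule sum.cong) auto
  also have "\<dots> = (\<Sum>u\<in>U. a u * f u)"
    by (simp add: sum.If_cases)
  finally show ?thesis
    by (simp add: vinner_def quadrature_error_def left_diff_distrib sum_subtractf sum_distrib_left)
qed

lemma vinner_quadrature_error_self_le:
  fixes a :: "'v::finite \<Rightarrow> real"
  assumes nonneg: "\<forall>u\<in>U. 0 \<le> a u" and sum_a: "sum a U = 1"
  shows "vinner (quadrature_error U a) (quadrature_error U a) \<le> 1"
proof -
  let ?L = "quadrature_error U a"
  have "(\<Sum>v\<in>UNIV. ?L v) = vinner ?L (\<lambda>_. 1)"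
    by (simp add: vinner_def)
  also have "\<dots> = 0"
    by (simp add: vinner_quadrature_error sum_a)
  finally have "vinner ?L ?L = - (\<Sum>u\<in>U. a u * ?L u)"
    by (simp add: vinner_quadrature_error)
  also have "(\<Sum>u\<in>U. a u * ?L u) = (\<Sum>u\<in>U. a u) / CARD('v) - (\<Sum>u\<in>U. a u * a u)"
    by (simp add: quadrature_error_def right_diff_distrib sum_subtractf sum_divide_distrib)
  also have "(\<Sum>u\<in>U. a u * a u) \<le> (\<Sum>u\<in>U. a u)"
    using nonneg sum_a member_le_sum[of _ U a] by (intro sum_mono) (simp add: mult_left_le)
  finally have "vinner ?L ?L \<le> 1 - 1 / CARD('v)"
    using sum_a by simp
  then show ?thesis
    by (smt (verit) divide_nonneg_nonneg of_nat_0_le_iff)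
qed

lemma abs_quadrature_error_le_tail:
  fixes \<phi> :: "'i \<Rightarrow> 'v::finite \<Rightarrow> real"
  assumes orthonormal: "\<And>i j. i \<in> I \<Longrightarrow> j \<in> I \<Longrightarrow> vinner (\<phi> i) (\<phi> j) = (if i = j then 1 else 0)"
    and card_I: "card I = CARD('v)"
    and "J \<subseteq> I"
    and weights: "\<forall>u\<in>U. 0 \<le> a u" "sum a U = 1"
    and exact: "\<And>i. i \<in> I - J \<Longrightarrow> vinner (quadrature_error U a) (\<phi> i) = 0"
  shows "\<bar>vinner (quadrature_error U a) f\<bar> \<le> sqrt (\<Sum>i\<in>J. (vinner (\<phi> i) f)\<^sup>2)"
proof -
  let ?tail = "sqrt (\<Sum>i\<in>J. (vinner (\<phi> i) f)\<^sup>2)"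
  have "\<bar>vinner (quadrature_error U a) f\<bar>
      \<le> sqrt (vinner (quadrature_error U a) (quadrature_error U a)) * ?tail"
    by (rule abs_vinner_le_tail_coefficients[OF orthonormal card_I \<open>J \<subseteq> I\<close> exact])
  also have "\<dots> \<le> 1 * ?tail"
    using vinner_quadrature_error_self_le[OF weights]
    by (intro mult_right_mono) (simp_all add: sum_nonneg)
  finally show ?thesis
    by simp
qed

theorem proposition3:
  fixes E :: "'v::finite \<Rightarrow> 'v \<Rightarrow> bool"
    and d :: nat and n :: nat and l :: nat
    and \<phi> :: "nat \<Rightarrow> 'v \<Rightarrow> real" and lam :: "nat \<Rightarrow> real"
  assumes graph: "simple_graph E"
    and conn: "connected_graph E"
    and reg: "regular_graph E d"
    and n_def: "n = CARD('v)"
    and eig: "\<And>i. i \<in> {1..n} \<Longrightarrow>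
        mat_app (\<lambda>v w. adj_matrix E v w / real d) (\<phi> i) = (\<lambda>v. lam i * \<phi> i v)"
    and orthonormal: "\<And>i j. i \<in> {1..n} \<Longrightarrow> j \<in> {1..n} \<Longrightarrow>
        vinner (\<phi> i) (\<phi> j) = (if i = j then 1 else 0)"
    and lam1: "lam 1 = 1"
    and lam_ord: "\<And>i j. 1 \<le> i \<Longrightarrow> i \<le> j \<Longrightarrow> j \<le> n \<Longrightarrow> \<bar>lam j\<bar> \<le> \<bar>lam i\<bar>"
    and phi1: "\<phi> 1 = (\<lambda>v. 1 / sqrt (real n))"
    and l_range: "1 \<le> l" "l \<le> n - 1"
  shows "\<exists>U :: 'v set. \<exists>a :: 'v \<Rightarrow> real. card U \<le> l \<and> (\<forall>u\<in>U. a u \<ge> 0) \<and>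
    (\<forall>f :: 'v \<Rightarrow> real.
       \<bar>(1 / real (card (UNIV :: 'v set))) * (\<Sum>v\<in>UNIV. f v) - (\<Sum>u\<in>U. a u * f u)\<bar>
         \<le> sqrt (\<Sum>i = l+1..n. (vinner (\<phi> i) f)\<^sup>2))"
proof -
  have centred: "(\<Sum>v\<in>UNIV. \<phi> j v) = 0" if "j \<in> {2..n}" for j
  proof -
    have "vinner (\<phi> 1) (\<phi> j) = 0"
      using orthonormal[of 1 j] that by simp
    then show ?thesis
      unfolding vinner_def phi1 n_def by (simp flip: sum_divide_distrib)
  qed
  have "(\<Sum>v\<in>UNIV. \<phi> j v) = 0" if "j \<in> {2..l}" for j
    using that l_range by (intro centred) auto
  then obtain U a where card_U: "card U \<le> card {2..l} + 1"
      and weights: "\<forall>u\<in>U. 0 \<le> a u" "sum a U = 1"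
      and exact: "\<forall>j\<in>{2..l}. (\<Sum>u\<in>U. a u * \<phi> j u) = 0"
    by (rule sparse_weights_with_vanishing_moments[OF finite_atLeastAtMost])
  have orthogonal: "vinner (quadrature_error U a) (\<phi> i) = 0" if "i \<in> {1..n} - {l+1..n}" for i
  proof (cases "i = 1")
    case True
    show ?thesis
      unfolding True phi1 vinner_quadrature_error
      using weights(2) n_def by (simp flip: sum_divide_distrib)
  next
    case False
    with that have "i \<in> {2..l}" "i \<in> {2..n}"
      by auto
    with exact centred show ?thesis
      by (simp add: vinner_quadrature_error)
  qed
  have "\<bar>vinner (quadrature_error U a) f\<bar> \<le> sqrt (\<Sum>i = l+1..n. (vinner (\<phi> i) f)\<^sup>2)" for f
    by (rule abs_quadrature_error_le_tail[of "{1..n}" \<phi>])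
      (use orthonormal weights orthogonal n_def in auto)
  moreover have "card U \<le> l"
    using card_U l_range by simp
  ultimately show ?thesis
    using weights(1) unfolding vinner_quadrature_error by blast
qed

end
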